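(* Let $d\ge 2$, $2\le k\le d+1$, and let $y_1,\dots,y_N\in\{1,\dots,k\}$ be labels (the dataset may be class-balanced or class-imbalanced). Let $s>0$ and, for each $i$, let $\alpha_{i1}\ge\frac12$, $\alpha_{i2}\le\alpha_{i1}$, $\beta_{i1},\beta_{i2}\in\mathbb R$. For $\boldsymbol w_1,\dots,\boldsymbol w_k,\boldsymbol z_1,\dots,\boldsymbol z_N\in\mathbb S^{d-1}$ define the GM-Softmax empirical risk $$L=\frac1N\sum_{i=1}^N-\log\frac{\exp(s(\alpha_{i1}\boldsymbol w_{y_i}^{\mathrm T}\boldsymbol z_i+\beta_{i1}))}{\exp(s(\alpha_{i2}\boldsymbol w_{y_i}^{\mathrm T}\boldsymbol z_i+\beta_{i2}))+\sum_{j\ne y_i}\exp(s\boldsymbol w_j^{\mathrm T}\boldsymbol z_i)}.$$ Then for all such configurations satisfying $\sum_{j=1}^k\boldsymbol w_j=0$, $$L\ge\frac1N\sum_{i=1}^N\log\Big[\exp\big(s(\alpha_{i2}-\alpha_{i1}+\beta_{i2}-\beta_{i1})\big)+(k-1)\exp\big(-s(\tfrac1{k-1}+\alpha_{i1}+\beta_{i1})\big)\Big],$$ with equality if and only if $\boldsymbol w_i^{\mathrm T}\boldsymbol w_j=-\frac1{k-1}$ for all $i\ne j$ and $\boldsymbol z_i=\boldsymbol w_{y_i}$ for all $i$. Consequently the minimizers of $L$ subject to $\sum_j\boldsymbol w_j=0$ have the largest possible class margin $\arccos\frac{-1}{k-1}$ and the largest possible minimal sample margin $\frac{k}{k-1}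$.
   Context: $\mathbb S^{d-1}$ is the unit sphere in $\mathbb R^d$. Class margin: $m_c(\{\boldsymbol w_i\})=\arccos\big[\max_{i\ne j}\boldsymbol w_i^{\mathrm T}\boldsymbol w_j\big]$ for unit prototypes. Minimal sample margin: $\gamma_{\min}=\min_i\big(\boldsymbol w_{y_i}^{\mathrm T}\boldsymbol z_i-\max_{j\ne y_i}\boldsymbol w_j^{\mathrm T}\boldsymbol z_i\big)$. *)

theory Defs
  imports "HOL-Analysis.Analysis"
begin

text \<open>Classes are indexed by 1..k, samples by 1..N. Prototypes w j and features z i
  live in R^d = real^'d, with d = CARD('d).\<close>

definition gm_loss ::
  "real \<Rightarrow> (nat \<Rightarrow> real) \<Rightarrow> (nat \<Rightarrow> real) \<Rightarrow> (nat \<Rightarrow> real) \<Rightarrow> (nat \<Rightarrow> real)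
   \<Rightarrow> nat \<Rightarrow> nat \<Rightarrow> (nat \<Rightarrow> nat) \<Rightarrow> (nat \<Rightarrow> real^'d) \<Rightarrow> (nat \<Rightarrow> real^'d) \<Rightarrow> real" where
  "gm_loss s a1 a2 b1 b2 k N y w z =
     (1 / real N) * (\<Sum>i=1..N.
        - ln (exp (s * (a1 i * (w (y i) \<bullet> z i) + b1 i)) /
              (exp (s * (a2 i * (w (y i) \<bullet> z i) + b2 i))
               + (\<Sum>j\<in>{1..k} - {y i}. exp (s * (w j \<bullet> z i))))))"

definition gm_bound ::
  "real \<Rightarrow> (nat \<Rightarrow> real) \<Rightarrow> (nat \<Rightarrow> real) \<Rightarrow> (nat \<Rightarrow> real) \<Rightarrow> (nat \<Rightarrow> real)
   \<Rightarrow> nat \<Rightarrow> nat \<Rightarrow> real" where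
  "gm_bound s a1 a2 b1 b2 k N =
     (1 / real N) * (\<Sum>i=1..N.
        ln (exp (s * (a2 i - a1 i + b2 i - b1 i))
            + (real k - 1) * exp (- s * (1 / (real k - 1) + a1 i + b1 i))))"

definition class_margin :: "nat \<Rightarrow> (nat \<Rightarrow> real^'d) \<Rightarrow> real" where
  "class_margin k w =
     arccos (Max {w i \<bullet> w j | i j. i \<in> {1..k} \<and> j \<in> {1..k} \<and> i \<noteq> j})"

definition min_sample_margin ::
  "nat \<Rightarrow> nat \<Rightarrow> (nat \<Rightarrow> nat) \<Rightarrow> (nat \<Rightarrow> real^'d) \<Rightarrow> (nat \<Rightarrow> real^'d) \<Rightarrow> real" where
  "min_sample_margin k N y w z =
     Min {w (y i) \<bullet> z i - Max {w j \<bullet> z i | j. j \<in> {1..k} \<and> j \<noteq> y i} | i. i \<in> {1..N}}"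

definition feasible ::
  "nat \<Rightarrow> nat \<Rightarrow> (nat \<Rightarrow> real^'d) \<Rightarrow> (nat \<Rightarrow> real^'d) \<Rightarrow> bool" where
  "feasible k N w z \<longleftrightarrow>
     (\<forall>j\<in>{1..k}. norm (w j) = 1) \<and> (\<forall>i\<in>{1..N}. norm (z i) = 1)
     \<and> (\<Sum>j=1..k. w j) = 0"

end

theory Submission
  imports Defs
begin

text \<open>Because the prototypes sum to zero, the cosines \<open>w\<^sub>j \<bullet> z\<close> of a feature with the
  \<open>k - 1\<close> non-target prototypes average to \<open>-c/(k - 1)\<close>, where \<open>c = w\<^sub>y \<bullet> z \<le> 1\<close>.
  After dividing by the target term, the loss of a sample is the logarithm of a head term plus a
  sum of \<open>k - 1\<close> exponentials; Jensen's inequality bounds the sum by \<open>k - 1\<close> times the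
  exponential of its mean logit, and \<open>c \<le> 1\<close> (together with \<open>\<alpha>\<^sub>2 \<le> \<alpha>\<^sub>1\<close> for the head)
  bounds everything by its value at \<open>c = 1\<close>. Equality forces \<open>z = w\<^sub>y\<close> and all non-target
  cosines to be \<open>-1/(k - 1)\<close>, i.e. a simplex equiangular tight frame, which fits into
  dimension \<open>d \<ge> k - 1\<close> and hence attains the bound and describes all minimisers. The margin
  bounds use the same averaging: a maximum is at least the mean.\<close>

section \<open>Jensen's inequality for the exponential\<close>

lemma exp_ge_tangent: "exp m * (1 + (x - m)) \<le> exp (x::real)"
proof -
  have "exp m * (1 + (x - m)) \<le> exp m * exp (x - m)"
    by (intro mult_left_mono exp_ge_add_one_self) simp
  then show ?thesis by (simp flip: exp_add)
qed

lemma exp_gt_tangent: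
  assumes "x \<noteq> (m::real)" shows "exp m * (1 + (x - m)) < exp x"
proof -
  have "1 + (x - m) < exp (x - m)"
    using exp_minus_greater[of "m - x"] assms by simp
  then have "exp m * (1 + (x - m)) < exp m * exp (x - m)" by simp
  then show ?thesis by (simp flip: exp_add)
qed

lemma sum_tangent_exp_mean:
  fixes x :: "'a \<Rightarrow> real"
  assumes "finite J" "J \<noteq> {}"
  defines "m \<equiv> sum x J / real (card J)"
  shows "(\<Sum>j\<in>J. exp m * (1 + (x j - m))) = real (card J) * exp m"
  using assms by (simp add: m_def sum.distrib sum_subtractf flip: sum_distrib_left)

lemma card_exp_mean_le_sum_exp:
  fixes x :: "'a \<Rightarrow> real"
  assumes "finite J" "J \<noteq> {}"
  shows "real (card J) * exp (sum x J / real (card J)) \<le> (\<Sum>j\<in>J. exp (x j))"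
  unfolding sum_tangent_exp_mean[OF assms, symmetric] by (intro sum_mono exp_ge_tangent)

lemma card_exp_mean_eq_sum_exp_iff:
  fixes x :: "'a \<Rightarrow> real"
  assumes "finite J" "J \<noteq> {}"
  shows "real (card J) * exp (sum x J / real (card J)) = (\<Sum>j\<in>J. exp (x j))
    \<longleftrightarrow> (\<forall>j\<in>J. x j = sum x J / real (card J))"
proof -
  define m where "m = sum x J / real (card J)"
  have "real (card J) * exp m < (\<Sum>j\<in>J. exp (x j))" if "\<exists>j\<in>J. x j \<noteq> m"
    unfolding m_def sum_tangent_exp_mean[OF assms, symmetric] using that
    by (intro sum_strict_mono_ex1 assms(1)) (auto simp: m_def intro: exp_ge_tangent exp_gt_tangent)
  moreover have "real (card J) * exp m = (\<Sum>j\<in>J. exp (x j))" if "\<forall>j\<in>J. x j = m"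
    using that by simp
  ultimately show ?thesis unfolding m_def[symmetric] by (metis less_irrefl)
qed

section \<open>The bound for a single sample\<close>

lemma neg_ln_exp_div_exp_sum:
  fixes a b :: real and v :: "'a \<Rightarrow> real"
  shows "- ln (exp a / (exp b + (\<Sum>j\<in>J. exp (v j))))
    = ln (exp (b - a) + (\<Sum>j\<in>J. exp (v j - a)))"
proof -
  have pos: "0 < exp b + (\<Sum>j\<in>J. exp (v j))" by (intro add_pos_nonneg) (auto intro: sum_nonneg)
  have "exp (b - a) + (\<Sum>j\<in>J. exp (v j - a)) = (exp b + (\<Sum>j\<in>J. exp (v j))) / exp a"
    by (simp add: exp_diff add_divide_distrib sum_divide_distrib)
  with pos show ?thesis by (simp add: ln_div)
qed

lemma gm_tail_lower_bound:
  fixes J :: "'a set" and v :: "'a \<Rightarrow> real"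
  defines "K \<equiv> real (card J)"
  assumes J_fin: "finite J" and J_ne: "J \<noteq> {}" and v_sum: "sum v J = - c" and c_le: "c \<le> 1"
    and s: "0 < s" and a1_gt: "- 1 / K < a1"
  shows "K * exp (- s * (1 / K + a1 + b1)) \<le> (\<Sum>j\<in>J. exp (s * v j - s * (a1 * c + b1)))"
      (is "?bound \<le> ?tail")
    and "K * exp (- s * (1 / K + a1 + b1)) = (\<Sum>j\<in>J. exp (s * v j - s * (a1 * c + b1)))
      \<longleftrightarrow> c = 1 \<and> (\<forall>j\<in>J. v j = - 1 / K)"
proof -
  have K: "0 < K" using J_fin J_ne by (simp add: K_def card_gt_0_iff)
  define x where "x j = s * v j - s * (a1 * c + b1)" for j
  define m0 where "m0 = - s * (1 / K + a1 + b1)"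
  have pos: "0 < s * (1 / K + a1)" using s a1_gt by simp
  \<comment> \<open>the mean logit exceeds its value at the simplex configuration by a multiple of \<open>1 - c\<close>\<close>
  have mean: "sum x J / K = m0 + (1 - c) * (s * (1 / K + a1))"
    using K by (simp add: x_def m0_def sum_subtractf v_sum field_simps flip: sum_distrib_left K_def)
  have "m0 \<le> sum x J / K"
    unfolding mean using pos c_le by (simp add: mult_nonneg_nonneg less_imp_le)
  then have shift: "K * exp m0 \<le> K * exp (sum x J / K)" using K by simp
  have jensen: "K * exp (sum x J / K) \<le> (\<Sum>j\<in>J. exp (x j))"
    using card_exp_mean_le_sum_exp[OF J_fin J_ne, of x, folded K_def] .
  then show "?bound \<le> ?tail"
    using shift by (simp add: x_def m0_def)
  have "K * exp m0 = (\<Sum>j\<in>J. exp (x j))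
      \<longleftrightarrow> K * exp m0 = K * exp (sum x J / K) \<and> K * exp (sum x J / K) = (\<Sum>j\<in>J. exp (x j))"
    using shift jensen by linarith
  also have "\<dots> \<longleftrightarrow> c = 1 \<and> (\<forall>j\<in>J. x j = m0)"
  proof -
    have "K * exp m0 = K * exp (sum x J / K) \<longleftrightarrow> c = 1" using K mean pos by auto
    then show ?thesis
      using card_exp_mean_eq_sum_exp_iff[OF J_fin J_ne, of x, folded K_def] mean by auto
  qed
  also have "\<dots> \<longleftrightarrow> c = 1 \<and> (\<forall>j\<in>J. v j = - 1 / K)"
  proof -
    have "x j = m0 \<longleftrightarrow> v j = - 1 / K" if "c = 1" for j
    proof -
      have "x j - m0 = s * (v j - - 1 / K)" using that by (simp add: x_def m0_def algebra_simps)
      then show ?thesis using s by (metis eq_iff_diff_eq_0 mult_eq_0_iff less_irrefl)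
    qed
    then show ?thesis by auto
  qed
  finally show "?bound = ?tail \<longleftrightarrow> c = 1 \<and> (\<forall>j\<in>J. v j = - 1 / K)"
    by (simp add: x_def m0_def)
qed

lemma gm_logit_lower_bound:
  fixes J :: "'a set" and v :: "'a \<Rightarrow> real"
  defines "K \<equiv> real (card J)"
  assumes J_fin: "finite J" and J_ne: "J \<noteq> {}" and v_sum: "sum v J = - c" and c_le: "c \<le> 1"
    and s: "0 < s" and a2_le: "a2 \<le> a1" and a1_gt: "- 1 / K < a1"
  shows "ln (exp (s * (a2 - a1 + b2 - b1)) + K * exp (- s * (1 / K + a1 + b1)))
      \<le> - ln (exp (s * (a1 * c + b1)) / (exp (s * (a2 * c + b2)) + (\<Sum>j\<in>J. exp (s * v j))))"
      (is "?bound \<le> ?loss")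
    and "- ln (exp (s * (a1 * c + b1)) / (exp (s * (a2 * c + b2)) + (\<Sum>j\<in>J. exp (s * v j))))
      = ln (exp (s * (a2 - a1 + b2 - b1)) + K * exp (- s * (1 / K + a1 + b1)))
      \<longleftrightarrow> c = 1 \<and> (\<forall>j\<in>J. v j = - 1 / K)"
proof -
  define head where "head = exp (s * (a2 * c + b2) - s * (a1 * c + b1))"
  define head0 where "head0 = exp (s * (a2 - a1 + b2 - b1))"
  define tail where "tail = (\<Sum>j\<in>J. exp (s * v j - s * (a1 * c + b1)))"
  define tail0 where "tail0 = K * exp (- s * (1 / K + a1 + b1))"
  note tail = gm_tail_lower_bound[OF J_fin J_ne v_sum c_le s a1_gt[unfolded K_def], folded K_def]
  have tail_ge: "tail0 \<le> tail" unfolding tail0_def tail_def by (rule tail(1))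
  have tail_eq: "tail0 = tail \<longleftrightarrow> c = 1 \<and> (\<forall>j\<in>J. v j = - 1 / K)"
    unfolding tail0_def tail_def by (rule tail(2))
  have head_ge: "head0 \<le> head"
    using mult_left_mono[OF mult_nonneg_nonneg[of "a1 - a2" "1 - c"] less_imp_le[OF s]] a2_le c_le
    by (simp add: head_def head0_def algebra_simps)
  have pos0: "0 < head0 + tail0" using J_fin J_ne by (simp add: head0_def tail0_def K_def add_pos_nonneg)
  have loss: "?loss = ln (head + tail)"
    by (simp add: neg_ln_exp_div_exp_sum head_def tail_def)
  show "?bound \<le> ?loss"
    unfolding loss head0_def[symmetric] tail0_def[symmetric] using head_ge tail_ge pos0 by simp
  have "ln (head + tail) = ln (head0 + tail0) \<longleftrightarrow> head = head0 \<and> tail0 = tail"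
    using head_ge tail_ge pos0 by (subst ln_inj_iff) (simp_all, linarith)
  also have "\<dots> \<longleftrightarrow> c = 1 \<and> (\<forall>j\<in>J. v j = - 1 / K)"
    using tail_eq by (auto simp: head_def head0_def algebra_simps)
  finally show "?loss = ?bound \<longleftrightarrow> c = 1 \<and> (\<forall>j\<in>J. v j = - 1 / K)"
    unfolding loss head0_def[symmetric] tail0_def[symmetric] .
qed

lemma sum_inner_others_eq_neg:
  fixes w :: "nat \<Rightarrow> 'a::real_inner"
  assumes "(\<Sum>j=1..k. w j) = 0" and "c \<in> {1..k}"
  shows "(\<Sum>j\<in>{1..k} - {c}. w j \<bullet> x) = - (w c \<bullet> x)"
proof -
  have "0 = (\<Sum>j=1..k. w j \<bullet> x)" using assms(1) by (simp flip: inner_sum_left)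
  also have "\<dots> = w c \<bullet> x + (\<Sum>j\<in>{1..k} - {c}. w j \<bullet> x)"
    using assms(2) by (intro sum.remove) simp_all
  finally show ?thesis by linarith
qed

lemma atLeastAtMost_Diff_singleton_nonempty: "2 \<le> k \<Longrightarrow> {1..k} - {c::nat} \<noteq> {}"
proof -
  assume "2 \<le> k"
  then have "(if c = 1 then 2 else 1) \<in> {1..k} - {c}" by auto
  then show ?thesis by blast
qed

lemma unit_inner_eq_1_iff:
  fixes u v :: "'a::real_inner"
  assumes "norm u = 1" "norm v = 1"
  shows "u \<bullet> v = 1 \<longleftrightarrow> v = u"
  using norm_cauchy_schwarz_eq[of u v] assms by (auto simp: norm_eq_1)

definition gm_sample_loss ::
  "real \<Rightarrow> real \<Rightarrow> real \<Rightarrow> real \<Rightarrow> real \<Rightarrow> nat \<Rightarrow> nat \<Rightarrow> (nat \<Rightarrow> 'a::real_inner) \<Rightarrow> 'a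
    \<Rightarrow> real"
  where "gm_sample_loss s a1 a2 b1 b2 k c w z =
    - ln (exp (s * (a1 * (w c \<bullet> z) + b1)) /
          (exp (s * (a2 * (w c \<bullet> z) + b2)) + (\<Sum>j\<in>{1..k} - {c}. exp (s * (w j \<bullet> z)))))"

definition gm_sample_bound :: "real \<Rightarrow> real \<Rightarrow> real \<Rightarrow> real \<Rightarrow> real \<Rightarrow> nat \<Rightarrow> real"
  where "gm_sample_bound s a1 a2 b1 b2 k =
    ln (exp (s * (a2 - a1 + b2 - b1)) + (real k - 1) * exp (- s * (1 / (real k - 1) + a1 + b1)))"

lemma gm_sample_loss_lower_bound:
  fixes w :: "nat \<Rightarrow> 'a::real_inner" and z :: 'a
  assumes k: "2 \<le> k" and c: "c \<in> {1..k}"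
    and w_unit: "\<forall>j\<in>{1..k}. norm (w j) = 1" and w_sum: "(\<Sum>j=1..k. w j) = 0"
    and z_unit: "norm z = 1"
    and s: "0 < s" and a2_le: "a2 \<le> a1" and a1_gt: "- 1 / (real k - 1) < a1"
  shows "gm_sample_bound s a1 a2 b1 b2 k \<le> gm_sample_loss s a1 a2 b1 b2 k c w z"
      (is "?bound \<le> ?loss")
    and "gm_sample_loss s a1 a2 b1 b2 k c w z = gm_sample_bound s a1 a2 b1 b2 k
      \<longleftrightarrow> z = w c \<and> (\<forall>j\<in>{1..k} - {c}. w j \<bullet> w c = - 1 / (real k - 1))"
proof -
  have card: "real (card ({1..k} - {c})) = real k - 1" using c k by (simp add: of_nat_diff)
  have wc: "norm (w c) = 1" using w_unit c by blast
  have "w c \<bullet> z \<le> 1" using norm_cauchy_schwarz[of "w c" z] wc z_unit by simp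
  note bound = gm_logit_lower_bound[of "{1..k} - {c}" "\<lambda>j. w j \<bullet> z" "w c \<bullet> z",
      unfolded card, OF _ atLeastAtMost_Diff_singleton_nonempty[OF k] sum_inner_others_eq_neg[OF w_sum c] this s a2_le a1_gt, simplified]
  show "?bound \<le> ?loss"
    using bound(1) by (simp add: gm_sample_bound_def gm_sample_loss_def)
  show "?loss = ?bound \<longleftrightarrow> z = w c \<and> (\<forall>j\<in>{1..k} - {c}. w j \<bullet> w c = - 1 / (real k - 1))"
    using bound(2) unit_inner_eq_1_iff[OF wc z_unit]
    by (auto simp: gm_sample_bound_def gm_sample_loss_def)
qed

section \<open>The bound for the empirical risk\<close>

lemma sum_eq_sum_iff_of_le:
  fixes f g :: "'a \<Rightarrow> 'b::ordered_cancel_comm_monoid_add"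
  assumes "finite A" and "\<forall>i\<in>A. f i \<le> g i"
  shows "sum f A = sum g A \<longleftrightarrow> (\<forall>i\<in>A. f i = g i)"
proof
  assume eq: "sum f A = sum g A"
  show "\<forall>i\<in>A. f i = g i"
  proof (rule ccontr)
    assume "\<not> ?thesis"
    then have "sum f A < sum g A"
      using assms by (intro sum_strict_mono_ex1) (auto simp: order.order_iff_strict)
    with eq show False by simp
  qed
qed simp

lemma gm_loss_eq_mean:
  "gm_loss s a1 a2 b1 b2 k N y w z
    = (\<Sum>i=1..N. gm_sample_loss s (a1 i) (a2 i) (b1 i) (b2 i) k (y i) w (z i)) / real N"
  by (simp add: gm_loss_def gm_sample_loss_def)

lemma gm_bound_eq_mean:
  "gm_bound s a1 a2 b1 b2 k N = (\<Sum>i=1..N. gm_sample_bound s (a1 i) (a2 i) (b1 i) (b2 i) k) / real N"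
  by (simp add: gm_bound_def gm_sample_bound_def)

lemma gm_loss_lower_bound:
  fixes w z :: "nat \<Rightarrow> real^'d"
  assumes k: "2 \<le> k" and labels: "\<forall>i\<in>{1..N}. y i \<in> {1..k}"
    and s: "0 < s" and a1_gt: "\<forall>i\<in>{1..N}. - 1 / (real k - 1) < a1 i"
    and a2_le: "\<forall>i\<in>{1..N}. a2 i \<le> a1 i"
    and F: "feasible k N w z"
  shows "gm_bound s a1 a2 b1 b2 k N \<le> gm_loss s a1 a2 b1 b2 k N y w z" (is "?bound \<le> ?loss")
    and "gm_loss s a1 a2 b1 b2 k N y w z = gm_bound s a1 a2 b1 b2 k N
      \<longleftrightarrow> N = 0 \<or> (\<forall>i\<in>{1..N}. z i = w (y i)
            \<and> (\<forall>j\<in>{1..k} - {y i}. w j \<bullet> w (y i) = - 1 / (real k - 1)))"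
proof -
  let ?L = "\<lambda>i. gm_sample_loss s (a1 i) (a2 i) (b1 i) (b2 i) k (y i) w (z i)"
  let ?B = "\<lambda>i. gm_sample_bound s (a1 i) (a2 i) (b1 i) (b2 i) k"
  note sample = gm_sample_loss_lower_bound[OF k _ _ _ _ s]
  have w_unit: "\<forall>j\<in>{1..k}. norm (w j) = 1" and z_unit: "\<forall>i\<in>{1..N}. norm (z i) = 1"
    and w_sum: "(\<Sum>j=1..k. w j) = 0" using F by (simp_all add: feasible_def)
  have le: "\<forall>i\<in>{1..N}. ?B i \<le> ?L i"
    using sample(1) labels w_unit w_sum z_unit a2_le a1_gt by blast
  show "?bound \<le> ?loss"
    unfolding gm_loss_eq_mean gm_bound_eq_mean using le
    by (intro divide_right_mono sum_mono) auto
  have "?loss = ?bound \<longleftrightarrow> N = 0 \<or> (\<forall>i\<in>{1..N}. ?B i = ?L i)"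
    unfolding gm_loss_eq_mean gm_bound_eq_mean sum_eq_sum_iff_of_le[OF finite_atLeastAtMost le, symmetric]
    by auto
  also have "\<dots> \<longleftrightarrow> N = 0 \<or> (\<forall>i\<in>{1..N}. z i = w (y i)
            \<and> (\<forall>j\<in>{1..k} - {y i}. w j \<bullet> w (y i) = - 1 / (real k - 1)))"
    using sample(2) labels w_unit w_sum z_unit a2_le a1_gt by (metis (no_types, lifting))
  finally show "?loss = ?bound \<longleftrightarrow> N = 0 \<or> (\<forall>i\<in>{1..N}. z i = w (y i)
      \<and> (\<forall>j\<in>{1..k} - {y i}. w j \<bullet> w (y i) = - 1 / (real k - 1)))" .
qed

lemma gm_loss_eq_bound_iff:
  fixes w z :: "nat \<Rightarrow> real^'d"
  assumes k: "2 \<le> k" and labels: "\<forall>i\<in>{1..N}. y i \<in> {1..k}"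
    and classes_nonempty: "\<forall>c\<in>{1..k}. \<exists>i\<in>{1..N}. y i = c"
    and s: "0 < s" and a1_gt: "\<forall>i\<in>{1..N}. - 1 / (real k - 1) < a1 i"
    and a2_le: "\<forall>i\<in>{1..N}. a2 i \<le> a1 i"
    and F: "feasible k N w z"
  shows "gm_loss s a1 a2 b1 b2 k N y w z = gm_bound s a1 a2 b1 b2 k N
    \<longleftrightarrow> (\<forall>i\<in>{1..k}. \<forall>j\<in>{1..k}. i \<noteq> j \<longrightarrow> w i \<bullet> w j = - 1 / (real k - 1))
        \<and> (\<forall>i\<in>{1..N}. z i = w (y i))"
proof -
  have "1 \<in> {1..k}" using k by simp
  then obtain i where "i \<in> {1..N}" using classes_nonempty by blast
  then have "N \<noteq> 0" by simp
  moreover have "(\<forall>i\<in>{1..N}. z i = w (y i)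
        \<and> (\<forall>j\<in>{1..k} - {y i}. w j \<bullet> w (y i) = - 1 / (real k - 1)))
    \<longleftrightarrow> (\<forall>i\<in>{1..k}. \<forall>j\<in>{1..k}. i \<noteq> j \<longrightarrow> w i \<bullet> w j = - 1 / (real k - 1))
        \<and> (\<forall>i\<in>{1..N}. z i = w (y i))" (is "?per_sample \<longleftrightarrow> ?simplex \<and> ?aligned")
  proof
    assume per_sample: ?per_sample
    have "w p \<bullet> w q = - 1 / (real k - 1)" if pq: "p \<in> {1..k}" "q \<in> {1..k}" "p \<noteq> q" for p q
    proof -
      obtain i where "i \<in> {1..N}" "y i = q" using classes_nonempty pq(2) by blast
      then show ?thesis using per_sample pq by auto
    qed
    then show "?simplex \<and> ?aligned" using per_sample by blast
  qed (use labels in auto)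
  ultimately show ?thesis
    using gm_loss_lower_bound(2)[OF k labels s a1_gt a2_le F] by simp
qed

section \<open>Simplex equiangular tight frames\<close>

lemma simplex_from_orthonormal:
  fixes e :: "nat \<Rightarrow> 'a::real_inner"
  assumes m: "1 \<le> m" and e: "\<forall>p\<in>{1..m}. \<forall>q\<in>{1..m}. e p \<bullet> e q = (if p = q then 1 else 0)"
  shows "\<exists>w :: nat \<Rightarrow> 'a. (\<forall>j\<in>{1..Suc m}. norm (w j) = 1) \<and> (\<Sum>j=1..Suc m. w j) = 0
    \<and> (\<forall>i\<in>{1..Suc m}. \<forall>j\<in>{1..Suc m}. i \<noteq> j \<longrightarrow> w i \<bullet> w j = - 1 / real m)"
proof -
  define u where "u = (\<Sum>j=1..m. e j)"
  define r where "r = sqrt (real m)"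
  define a where "a = sqrt (real m + 1) / r"
  define b where "b = (1 / r - a) / real m"
  \<comment> \<open>\<open>w (Suc m) = - u / r\<close>; the conditions \<open>a + m b = 1 / r\<close> (zero sum) and
    \<open>a\<^sup>2 = (m + 1) / m\<close> (equal norms) determine \<open>a\<close> and \<open>b\<close>\<close>
  define w where "w j = (if j = Suc m then (- 1 / r) *\<^sub>R u else a *\<^sub>R e j + b *\<^sub>R u)" for j
  have m_pos: "0 < real m" using m by simp
  have r: "0 < r" "r * r = real m" using m_pos by (simp_all add: r_def)
  have a: "a * a = (real m + 1) / real m" using r by (simp add: a_def)
  have ab: "a + real m * b = 1 / r" using m_pos by (simp add: b_def)
  have tip: "- (a + real m * b) / r = - 1 / real m" unfolding ab using r by (simp add: field_simps)
  have cross: "2 * a * b + real m * b * b = - 1 / real m"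
  proof -
    have "2 * a * b + real m * b * b = b * (a + 1 / r)" by (simp add: ab flip: ab) (simp add: algebra_simps)
    also have "\<dots> = (1 / (r * r) - a * a) / real m" by (simp add: b_def algebra_simps)
    finally show ?thesis using m_pos by (simp add: r a field_simps)
  qed
  have eu: "e p \<bullet> u = 1" "u \<bullet> e p = 1" if "p \<in> {1..m}" for p
  proof -
    have "e p \<bullet> u = (\<Sum>q=1..m. if p = q then 1 else 0)"
      unfolding u_def inner_sum_right using e that by (intro sum.cong) auto
    then show "e p \<bullet> u = 1" "u \<bullet> e p = 1" using that by (simp_all add: inner_commute)
  qed
  have "u \<bullet> u = (\<Sum>p=1..m. e p \<bullet> u)" by (subst (1) u_def) (rule inner_sum_left)
  then have uu: "u \<bullet> u = real m" using eu by simp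
  have ww: "w p \<bullet> w q = (if p = q then 1 else - 1 / real m)"
    if pq: "p \<in> {1..Suc m}" "q \<in> {1..Suc m}" for p q
  proof -
    have ee: "e p \<bullet> e q = (if p = q then 1 else 0)" if "p \<in> {1..m}" "q \<in> {1..m}"
      using e that by blast
    consider "p \<in> {1..m}" "q \<in> {1..m}" | "p = Suc m" "q \<in> {1..m}" | "p \<in> {1..m}" "q = Suc m"
      | "p = Suc m" "q = Suc m" using pq by fastforce
    then show ?thesis
    proof cases
      case 1
      then have "w p \<bullet> w q = a * a * (e p \<bullet> e q) + (2 * a * b + real m * b * b)"
        by (simp add: w_def inner_add_left inner_add_right eu uu algebra_simps)
      then show ?thesis using 1 ee a cross m_pos by (auto simp: field_simps)
    next
      case 2
      then have "w p \<bullet> w q = - (a + real m * b) / r"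
        using r by (simp add: w_def inner_add_right eu uu field_simps)
      then show ?thesis using 2 tip by simp
    next
      case 3
      then have "w p \<bullet> w q = - (a + real m * b) / r"
        using r by (simp add: w_def inner_add_left eu uu field_simps)
      then show ?thesis using 3 tip by simp
    next
      case 4
      then show ?thesis using r m by (simp add: w_def uu field_simps)
    qed
  qed
  have "(\<Sum>j=1..Suc m. w j) = (\<Sum>j=1..m. a *\<^sub>R e j + b *\<^sub>R u) + (- 1 / r) *\<^sub>R u"
    by (simp add: w_def)
  also have "\<dots> = (a + real m * b - 1 / r) *\<^sub>R u"
  proof -
    have "(\<Sum>j=1..m. a *\<^sub>R e j) = a *\<^sub>R u" by (simp add: u_def scaleR_sum_right)
    moreover have "(\<Sum>j=1..m. b *\<^sub>R u) = (real m * b) *\<^sub>R u"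
      using sum_constant_scaleR[of "b *\<^sub>R u" "{1..m}"] by simp
    ultimately show ?thesis by (simp add: sum.distrib algebra_simps)
  qed
  finally have w_sum: "(\<Sum>j=1..Suc m. w j) = 0" by (simp add: ab)
  have w_unit: "\<forall>j\<in>{1..Suc m}. norm (w j) = 1" using ww by (simp add: norm_eq_1)
  have w_inner: "\<forall>i\<in>{1..Suc m}. \<forall>j\<in>{1..Suc m}. i \<noteq> j \<longrightarrow> w i \<bullet> w j = - 1 / real m"
    using ww by simp
  show ?thesis by (intro exI[of _ w] conjI w_unit w_sum w_inner)
qed

lemma simplex_exists:
  assumes k: "2 \<le> k" and kd: "k \<le> CARD('d) + 1"
  shows "\<exists>w :: nat \<Rightarrow> real^'d. (\<forall>j\<in>{1..k}. norm (w j) = 1) \<and> (\<Sum>j=1..k. w j) = 0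
    \<and> (\<forall>i\<in>{1..k}. \<forall>j\<in>{1..k}. i \<noteq> j \<longrightarrow> w i \<bullet> w j = - 1 / (real k - 1))"
proof -
  define m where "m = k - 1"
  have m: "1 \<le> m" "k = Suc m" "real k - 1 = real m" using k by (auto simp: m_def)
  have "card {1..m} \<le> card (UNIV :: 'd set)" using kd by (simp add: m_def)
  then obtain h :: "nat \<Rightarrow> 'd" where h: "inj_on h {1..m}"
    using card_le_inj[of "{1..m}" "UNIV :: 'd set"] by auto
  have "\<forall>p\<in>{1..m}. \<forall>q\<in>{1..m}. axis (h p) 1 \<bullet> axis (h q) (1::real) = (if p = q then 1 else 0)"
    using h by (auto simp: inner_axis_axis dest: inj_onD)
  from simplex_from_orthonormal[OF m(1) this] show ?thesis unfolding m(2) by simp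
qed

lemma gm_minimizer_is_simplex:
  fixes w z :: "nat \<Rightarrow> real^'d"
  assumes k: "2 \<le> k" and kd: "k \<le> CARD('d) + 1" and labels: "\<forall>i\<in>{1..N}. y i \<in> {1..k}"
    and classes_nonempty: "\<forall>c\<in>{1..k}. \<exists>i\<in>{1..N}. y i = c"
    and s: "0 < s" and a1_gt: "\<forall>i\<in>{1..N}. - 1 / (real k - 1) < a1 i"
    and a2_le: "\<forall>i\<in>{1..N}. a2 i \<le> a1 i"
    and F: "feasible k N w z"
    and min: "\<forall>(w' :: nat \<Rightarrow> real^'d) z'. feasible k N w' z' \<longrightarrow>
      gm_loss s a1 a2 b1 b2 k N y w z \<le> gm_loss s a1 a2 b1 b2 k N y w' z'"
  shows "(\<forall>i\<in>{1..k}. \<forall>j\<in>{1..k}. i \<noteq> j \<longrightarrow> w i \<bullet> w j = - 1 / (real k - 1))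
    \<and> (\<forall>i\<in>{1..N}. z i = w (y i))"
proof -
  note eq_iff = gm_loss_eq_bound_iff[OF k labels classes_nonempty s a1_gt a2_le]
  obtain w0 :: "nat \<Rightarrow> real^'d" where w0: "\<forall>j\<in>{1..k}. norm (w0 j) = 1" "(\<Sum>j=1..k. w0 j) = 0"
    "\<forall>i\<in>{1..k}. \<forall>j\<in>{1..k}. i \<noteq> j \<longrightarrow> w0 i \<bullet> w0 j = - 1 / (real k - 1)"
    using simplex_exists[OF k kd] by blast
  have F0: "feasible k N w0 (\<lambda>i. w0 (y i))" using w0 labels by (auto simp: feasible_def)
  have "gm_loss s a1 a2 b1 b2 k N y w z \<le> gm_loss s a1 a2 b1 b2 k N y w0 (\<lambda>i. w0 (y i))"
    using min F0 by blast
  also have "\<dots> = gm_bound s a1 a2 b1 b2 k N" using eq_iff[OF F0] w0(3) by simp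
  finally have "gm_loss s a1 a2 b1 b2 k N y w z \<le> gm_bound s a1 a2 b1 b2 k N" .
  moreover have "gm_bound s a1 a2 b1 b2 k N \<le> gm_loss s a1 a2 b1 b2 k N y w z"
    by (rule gm_loss_lower_bound(1)[OF k labels s a1_gt a2_le F])
  ultimately have "gm_loss s a1 a2 b1 b2 k N y w z = gm_bound s a1 a2 b1 b2 k N" by linarith
  then show ?thesis using eq_iff[OF F] by blast
qed

section \<open>Margins\<close>

lemma Max_inner_others_ge:
  fixes w :: "nat \<Rightarrow> 'a::real_inner"
  assumes k: "2 \<le> k" and w_sum: "(\<Sum>j=1..k. w j) = 0" and c: "c \<in> {1..k}"
  shows "- (w c \<bullet> x) / (real k - 1) \<le> Max ((\<lambda>j. w j \<bullet> x) ` ({1..k} - {c}))"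
proof -
  have card: "card ({1..k} - {c}) = k - 1" using c by simp
  have "- (w c \<bullet> x) \<le> real (card ({1..k} - {c})) * Max ((\<lambda>j. w j \<bullet> x) ` ({1..k} - {c}))"
    unfolding sum_inner_others_eq_neg[OF w_sum c, symmetric] by (intro sum_bounded_above) simp
  then show ?thesis using card k by (simp add: of_nat_diff field_simps)
qed

lemma class_margin_le:
  fixes w :: "nat \<Rightarrow> real^'d"
  assumes k: "2 \<le> k" and w_unit: "\<forall>j\<in>{1..k}. norm (w j) = 1"
    and w_sum: "(\<Sum>j=1..k. w j) = 0"
  shows "class_margin k w \<le> arccos (- 1 / (real k - 1))"
proof -
  define S where "S = {w i \<bullet> w j | i j. i \<in> {1..k} \<and> j \<in> {1..k} \<and> i \<noteq> j}"
  have fin: "finite S"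
    by (rule finite_subset[OF _ finite_image_set2[of "\<lambda>i. i \<in> {1..k}" "\<lambda>j. j \<in> {1..k}"
          "\<lambda>i j. w i \<bullet> w j"]]) (auto simp: S_def)
  have one: "1 \<in> {1..k}" using k by simp
  have sub: "(\<lambda>j. w j \<bullet> w 1) ` ({1..k} - {1}) \<subseteq> S" unfolding S_def using one by blast
  have "- 1 / (real k - 1) = - (w 1 \<bullet> w 1) / (real k - 1)"
    using w_unit one by (simp add: norm_eq_1)
  also have "\<dots> \<le> Max ((\<lambda>j. w j \<bullet> w 1) ` ({1..k} - {1}))"
    by (rule Max_inner_others_ge[OF k w_sum one])
  also have "\<dots> \<le> Max S"
    using atLeastAtMost_Diff_singleton_nonempty[OF k] by (intro Max_mono[OF sub _ fin]) blast
  finally have ge: "- 1 / (real k - 1) \<le> Max S" .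
  have "S \<noteq> {}" using sub atLeastAtMost_Diff_singleton_nonempty[OF k] by blast
  then obtain i j where "i \<in> {1..k}" "j \<in> {1..k}" "Max S = w i \<bullet> w j"
    using Max_in[OF fin] unfolding S_def by auto
  then have "\<bar>Max S\<bar> \<le> 1" using w_unit Cauchy_Schwarz_ineq2[of "w i" "w j"] by simp
  moreover have "\<bar>- 1 / (real k - 1)\<bar> \<le> 1" using k by simp
  ultimately show ?thesis
    using ge arccos_le_mono unfolding class_margin_def S_def[symmetric] by blast
qed

lemma sample_margin_le:
  fixes w :: "nat \<Rightarrow> 'a::real_inner"
  assumes k: "2 \<le> k" and w_sum: "(\<Sum>j=1..k. w j) = 0" and c: "c \<in> {1..k}"
    and unit: "norm (w c) = 1" "norm z = 1"
  shows "w c \<bullet> z - Max {w j \<bullet> z | j. j \<in> {1..k} \<and> j \<noteq> c} \<le> real k / (real k - 1)"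
proof -
  define t where "t = w c \<bullet> z"
  have "{w j \<bullet> z | j. j \<in> {1..k} \<and> j \<noteq> c} = (\<lambda>j. w j \<bullet> z) ` ({1..k} - {c})" by auto
  then have "- t / (real k - 1) \<le> Max {w j \<bullet> z | j. j \<in> {1..k} \<and> j \<noteq> c}"
    using Max_inner_others_ge[OF k w_sum c] by (simp add: t_def)
  moreover have "t + t / (real k - 1) = t * (real k / (real k - 1))" using k by (simp add: field_simps)
  moreover have "t \<le> 1" using norm_cauchy_schwarz[of "w c" z] unit by (simp add: t_def)
  then have "t * (real k / (real k - 1)) \<le> real k / (real k - 1)"
    using mult_right_mono[of t 1 "real k / (real k - 1)"] k by simp
  ultimately show ?thesis unfolding t_def by linarith
qed

lemma min_sample_margin_le:
  fixes w z :: "nat \<Rightarrow> real^'d"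
  assumes k: "2 \<le> k" and N: "1 \<le> N" and labels: "\<forall>i\<in>{1..N}. y i \<in> {1..k}"
    and F: "feasible k N w z"
  shows "min_sample_margin k N y w z \<le> real k / (real k - 1)"
proof -
  have i1: "1 \<in> {1..N}" and y1: "y 1 \<in> {1..k}" using N labels by auto
  have "min_sample_margin k N y w z
      \<le> w (y 1) \<bullet> z 1 - Max {w j \<bullet> z 1 | j. j \<in> {1..k} \<and> j \<noteq> y 1}"
    unfolding min_sample_margin_def using i1 by (intro Min_le) (auto simp: Setcompr_eq_image)
  also have "\<dots> \<le> real k / (real k - 1)"
    using F y1 i1 by (intro sample_margin_le[OF k]) (auto simp: feasible_def)
  finally show ?thesis .
qed

lemma class_margin_simplex:
  fixes w :: "nat \<Rightarrow> real^'d"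
  assumes k: "2 \<le> k"
    and simplex: "\<forall>i\<in>{1..k}. \<forall>j\<in>{1..k}. i \<noteq> j \<longrightarrow> w i \<bullet> w j = - 1 / (real k - 1)"
  shows "class_margin k w = arccos (- 1 / (real k - 1))"
proof -
  have "(1::nat) \<in> {1..k}" "(2::nat) \<in> {1..k}" "w 1 \<bullet> w 2 = - 1 / (real k - 1)"
    using simplex k by auto
  then have "- 1 / (real k - 1) \<in> {w i \<bullet> w j | i j. i \<in> {1..k} \<and> j \<in> {1..k} \<and> i \<noteq> j}"
    unfolding mem_Collect_eq by (intro exI[of _ 1] exI[of _ 2]) simp
  moreover have "{w i \<bullet> w j | i j. i \<in> {1..k} \<and> j \<in> {1..k} \<and> i \<noteq> j} \<subseteq> {- 1 / (real k - 1)}"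
    using simplex by auto
  ultimately have "{w i \<bullet> w j | i j. i \<in> {1..k} \<and> j \<in> {1..k} \<and> i \<noteq> j} = {- 1 / (real k - 1)}"
    by blast
  then show ?thesis by (simp add: class_margin_def)
qed

lemma min_sample_margin_simplex:
  fixes w z :: "nat \<Rightarrow> real^'d"
  assumes k: "2 \<le> k" and N: "1 \<le> N" and labels: "\<forall>i\<in>{1..N}. y i \<in> {1..k}"
    and w_unit: "\<forall>j\<in>{1..k}. norm (w j) = 1"
    and simplex: "\<forall>i\<in>{1..k}. \<forall>j\<in>{1..k}. i \<noteq> j \<longrightarrow> w i \<bullet> w j = - 1 / (real k - 1)"
    and aligned: "\<forall>i\<in>{1..N}. z i = w (y i)"
  shows "min_sample_margin k N y w z = real k / (real k - 1)"
proof -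
  have margin: "w (y i) \<bullet> z i - Max {w j \<bullet> z i | j. j \<in> {1..k} \<and> j \<noteq> y i} = real k / (real k - 1)"
    if i: "i \<in> {1..N}" for i
  proof -
    obtain j where j: "j \<in> {1..k}" "j \<noteq> y i"
      using atLeastAtMost_Diff_singleton_nonempty[OF k, of "y i"] by blast
    then have "w j \<bullet> z i = - 1 / (real k - 1)" using simplex labels aligned i by auto
    then have "- 1 / (real k - 1) \<in> {w j \<bullet> z i | j. j \<in> {1..k} \<and> j \<noteq> y i}"
      using j by force
    moreover have "{w j \<bullet> z i | j. j \<in> {1..k} \<and> j \<noteq> y i} \<subseteq> {- 1 / (real k - 1)}"
      using simplex labels aligned i by auto
    ultimately have "{w j \<bullet> z i | j. j \<in> {1..k} \<and> j \<noteq> y i} = {- 1 / (real k - 1)}"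
      by blast
    moreover have "w (y i) \<bullet> z i = 1" using aligned w_unit labels i by (simp add: norm_eq_1)
    ultimately show ?thesis using k by (simp add: field_simps)
  qed
  have "{w (y i) \<bullet> z i - Max {w j \<bullet> z i | j. j \<in> {1..k} \<and> j \<noteq> y i} | i. i \<in> {1..N}}
      = {real k / (real k - 1)}"
    using margin N by (auto intro!: exI[of _ 1])
  then show ?thesis by (simp add: min_sample_margin_def)
qed

lemma gm_minimizer_margins:
  fixes w z :: "nat \<Rightarrow> real^'d"
  assumes k: "2 \<le> k" and kd: "k \<le> CARD('d) + 1" and N: "1 \<le> N"
    and labels: "\<forall>i\<in>{1..N}. y i \<in> {1..k}"
    and classes_nonempty: "\<forall>c\<in>{1..k}. \<exists>i\<in>{1..N}. y i = c"
    and s: "0 < s" and a1_gt: "\<forall>i\<in>{1..N}. - 1 / (real k - 1) < a1 i"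
    and a2_le: "\<forall>i\<in>{1..N}. a2 i \<le> a1 i"
    and F: "feasible k N w z"
    and min: "\<forall>(w' :: nat \<Rightarrow> real^'d) z'. feasible k N w' z' \<longrightarrow>
      gm_loss s a1 a2 b1 b2 k N y w z \<le> gm_loss s a1 a2 b1 b2 k N y w' z'"
  shows "class_margin k w = arccos (- 1 / (real k - 1))
    \<and> min_sample_margin k N y w z = real k / (real k - 1)"
proof -
  have simplex: "\<forall>i\<in>{1..k}. \<forall>j\<in>{1..k}. i \<noteq> j \<longrightarrow> w i \<bullet> w j = - 1 / (real k - 1)"
    and aligned: "\<forall>i\<in>{1..N}. z i = w (y i)"
    using gm_minimizer_is_simplex[OF k kd labels classes_nonempty s a1_gt a2_le F min] by blast+
  have "\<forall>j\<in>{1..k}. norm (w j) = 1" using F by (simp add: feasible_def)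
  with simplex aligned show ?thesis
    using class_margin_simplex[OF k simplex] min_sample_margin_simplex[OF k N labels] by blast
qed

theorem theorem5:
  fixes s :: real and k N :: nat and y :: "nat \<Rightarrow> nat"
    and a1 a2 b1 b2 :: "nat \<Rightarrow> real"
  assumes d2: "CARD('d) \<ge> 2"
    and k2: "2 \<le> k" and kd: "k \<le> CARD('d) + 1"
    and N1: "1 \<le> N"
    and labels: "\<forall>i\<in>{1..N}. y i \<in> {1..k}"
    and classes_nonempty: "\<forall>c\<in>{1..k}. \<exists>i\<in>{1..N}. y i = c"
    and s_pos: "s > 0"
    and a1_ge: "\<forall>i\<in>{1..N}. a1 i \<ge> 1/2"
    and a2_le: "\<forall>i\<in>{1..N}. a2 i \<le> a1 i"
  shows
    "(\<forall>(w :: nat \<Rightarrow> real^'d) z. feasible k N w z \<longrightarrow>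
        gm_loss s a1 a2 b1 b2 k N y w z \<ge> gm_bound s a1 a2 b1 b2 k N
        \<and> (gm_loss s a1 a2 b1 b2 k N y w z = gm_bound s a1 a2 b1 b2 k N \<longleftrightarrow>
             (\<forall>i\<in>{1..k}. \<forall>j\<in>{1..k}. i \<noteq> j \<longrightarrow> w i \<bullet> w j = - 1 / (real k - 1))
             \<and> (\<forall>i\<in>{1..N}. z i = w (y i))))
     \<and> (\<forall>(w :: nat \<Rightarrow> real^'d) z.
          feasible k N w z
          \<and> (\<forall>(w' :: nat \<Rightarrow> real^'d) z'. feasible k N w' z' \<longrightarrow>
               gm_loss s a1 a2 b1 b2 k N y w z \<le> gm_loss s a1 a2 b1 b2 k N y w' z')
          \<longrightarrow> class_margin k w = arccos (- 1 / (real k - 1))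
              \<and> min_sample_margin k N y w z = real k / (real k - 1))
     \<and> (\<forall>(w :: nat \<Rightarrow> real^'d) z. feasible k N w z \<longrightarrow>
          class_margin k w \<le> arccos (- 1 / (real k - 1))
          \<and> min_sample_margin k N y w z \<le> real k / (real k - 1))"
proof -
  have a1_gt: "\<forall>i\<in>{1..N}. - 1 / (real k - 1) < a1 i"
  proof
    fix i assume "i \<in> {1..N}"
    then have "1 / 2 \<le> a1 i" using a1_ge by blast
    moreover have "- 1 / (real k - 1) < 0" using k2 by simp
    ultimately show "- 1 / (real k - 1) < a1 i" by linarith
  qed
  show ?thesis
  proof (intro conjI; intro allI impI)
    fix w z :: "nat \<Rightarrow> real^'d"
    assume F: "feasible k N w z"
    show "gm_bound s a1 a2 b1 b2 k N \<le> gm_loss s a1 a2 b1 b2 k N y w z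
      \<and> (gm_loss s a1 a2 b1 b2 k N y w z = gm_bound s a1 a2 b1 b2 k N \<longleftrightarrow>
          (\<forall>i\<in>{1..k}. \<forall>j\<in>{1..k}. i \<noteq> j \<longrightarrow> w i \<bullet> w j = - 1 / (real k - 1))
          \<and> (\<forall>i\<in>{1..N}. z i = w (y i)))"
      using gm_loss_lower_bound(1)[OF k2 labels s_pos a1_gt a2_le F]
        gm_loss_eq_bound_iff[OF k2 labels classes_nonempty s_pos a1_gt a2_le F] by (rule conjI)
  next
    fix w z :: "nat \<Rightarrow> real^'d"
    assume "feasible k N w z \<and> (\<forall>(w' :: nat \<Rightarrow> real^'d) z'. feasible k N w' z' \<longrightarrow>
      gm_loss s a1 a2 b1 b2 k N y w z \<le> gm_loss s a1 a2 b1 b2 k N y w' z')"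
    then show "class_margin k w = arccos (- 1 / (real k - 1))
      \<and> min_sample_margin k N y w z = real k / (real k - 1)"
      using gm_minimizer_margins[OF k2 kd N1 labels classes_nonempty s_pos a1_gt a2_le] by blast
  next
    fix w z :: "nat \<Rightarrow> real^'d"
    assume F: "feasible k N w z"
    then have "\<forall>j\<in>{1..k}. norm (w j) = 1" "(\<Sum>j=1..k. w j) = 0" by (simp_all add: feasible_def)
    then show "class_margin k w \<le> arccos (- 1 / (real k - 1))
      \<and> min_sample_margin k N y w z \<le> real k / (real k - 1)"
      using class_margin_le[OF k2] min_sample_margin_le[OF k2 N1 labels F] by blast
  qed
qed

end
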